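(* Let $\epsilon=\mu=\gamma=\chi=1$, $M>0$, $T>0$. Consider the Crank–Nicolson bound-preserving scheme started from $0\le\rho_h^0\le M$ (nodewise), $c_h^0\in X_h$, with $\rho_h^{-1}=\rho_h^0$, $c_h^{-1}=\tilde c_h^0=c_h^0$, $\lambda_h^0\equiv0$, $\xi_h^0=0$. Then there is a constant $C>0$ depending only on $M$ and $T$ such that for all $m\ge1$ with $m\delta t\le T$, $$\|\rho_h^m\|^2+\|\nabla_hc_h^m\|^2+\delta t\sum_{n=0}^{m-1}\|\Delta_h\tilde c_h^{n+\frac12}\|^2+\tfrac{\delta t^2}4\|\lambda_h^mg'(\rho_h^m)+\xi_h^m\|^2+\delta t\sum_{n=0}^{m-1}\|\nabla_h\tilde\rho_h^{n+\frac12}\|^2\le C\big(\|\rho_h^0\|^2+\|\nabla_hc_h^0\|^2\big).$$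
   Context: Discrete setting: $\Sigma_h$ finite set of nodes in $\bar\Omega\subset\mathbb R^d$; $X_h$ = real grid functions on $\Sigma_h$, nonlinear functions act pointwise. $[u,v]=\sum_z\beta_zu(z)v(z)$, $\beta_z>0$ (vector version $\sum_z\beta_zw(z)\cdot w'(z)$), $\|u\|=[u,u]^{1/2}$, $|\Omega|=[1,1]$. $\nabla_h,\nabla_h\cdot$ satisfy $[\nabla_h\cdot w,v]=-[w,\nabla_hv]$, $\nabla_h1=0$ (periodic boundary conditions); $\Delta_h=\nabla_h\cdot\nabla_h$. $\sigma,\delta t>0$. $\eta(\rho)=\frac{\rho(M-\rho)}M$, $g(\rho)=\rho(M-\rho)$, $g'(\rho)=M-2\rho$. Notation $\tilde c_h^{n+\frac12}=\frac{\tilde c_h^{n+1}+c_h^n}2$, $\tilde\rho_h^{n+\frac12}=\frac{\tilde\rho_h^{n+1}+\rho_h^n}2$, $\rho_h^{n+\frac12}=\frac{\rho_h^{n+1}+\rho_h^n}2$. Crank–Nicolson bound-preserving scheme ($\epsilon=\mu=\gamma=\chi=1$), for $n\ge0$: Step 1: $\frac{\tilde c_h^{n+1}-c_h^n}{\delta t}=\Delta_h\tilde c_h^{n+\frac12}+\frac32\rho_h^n-\frac12\rho_h^{n-1}$. Step 2: $\frac{\tilde\rho_h^{n+1}-\rho_h^n}{\delta t}=\Delta_h\tilde\rho_h^{n+\frac12}-\nabla_h\cdot(\eta(\frac32\rho_h^n-\frac12\rho_h^{n-1})\nabla_h(\frac32c_h^n-\frac12c_h^{n-1}))+\lambda_h^ng'(\rho_h^n)+\xi_h^n$.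 Step 3: find $\rho_h^{n+1},\lambda_h^{n+1}\in X_h$, $\xi_h^{n+1}\in\mathbb R$ with $\frac{\rho_h^{n+1}-\tilde\rho_h^{n+1}}{\delta t}=\frac{\lambda_h^{n+1}g'(\rho_h^{n+1})+\xi_h^{n+1}-\lambda_h^ng'(\rho_h^n)-\xi_h^n}2$ nodewise, $g(\rho_h^{n+1})\ge0$, $\lambda_h^{n+1}\ge0$, $\lambda_h^{n+1}g(\rho_h^{n+1})=0$ at every node, $[\rho_h^{n+1},1]=[\rho_h^0,1]$. Step 4: find $c_h^{n+1}$ and scalar $\theta_h^{n+\frac12}$ with $\frac{c_h^{n+1}-\tilde c_h^{n+1}}{\delta t}=\theta_h^{n+\frac12}$ and $\frac{E_h^{n+1}-E_h^n}{\delta t}=-[\eta(\rho_h^{n+\frac12})|\nabla_h(\log(\rho_h^{n+\frac12}+\sigma)-\tilde c_h^{n+\frac12})|^2+|\frac{\tilde c_h^{n+1}-\tilde c_h^n}{\delta t}|^2,1]$, where $E_h^j=[\rho_h^j\log(\rho_h^j+\sigma)+(M-\rho_h^j)\log(1-\rho_h^j/M+\sigma)-\rho_h^jc_h^j+\frac12|\nabla_hc_h^j|^2,1]$. *)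

theory Defs
  imports "HOL-Analysis.Analysis"
begin

text \<open>Grid functions are
  real-valued functions on R^d of which only the values on S matter; discrete vector
  fields take values in R^d.\<close>

type_synonym 'd gfun = "real^'d \<Rightarrow> real"
type_synonym 'd vfun = "real^'d \<Rightarrow> real^'d"

definition dip :: "(real^'d) set \<Rightarrow> 'd gfun \<Rightarrow> 'd gfun \<Rightarrow> 'd gfun \<Rightarrow> real" where
  "dip S beta u v = (\<Sum>z\<in>S. beta z * u z * v z)"

definition dvip :: "(real^'d) set \<Rightarrow> 'd gfun \<Rightarrow> 'd vfun \<Rightarrow> 'd vfun \<Rightarrow> real" where
  "dvip S beta w w' = (\<Sum>z\<in>S. beta z * (w z \<bullet> w' z))"

definition dnorm :: "(real^'d) set \<Rightarrow> 'd gfun \<Rightarrow> 'd gfun \<Rightarrow> real" where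
  "dnorm S beta u = sqrt (dip S beta u u)"

definition dvnorm :: "(real^'d) set \<Rightarrow> 'd gfun \<Rightarrow> 'd vfun \<Rightarrow> real" where
  "dvnorm S beta w = sqrt (dvip S beta w w)"

text \<open>Admissible discrete setting: finite node set, positive weights, discrete gradient and
  divergence satisfying the summation-by-parts identity [div w, v] = -[w, grad v]
  and grad 1 = 0 (periodic boundary conditions).\<close>
definition disc_setting ::
  "(real^'d) set \<Rightarrow> 'd gfun \<Rightarrow> ('d gfun \<Rightarrow> 'd vfun) \<Rightarrow> ('d vfun \<Rightarrow> 'd gfun) \<Rightarrow> bool" where
  "disc_setting S beta grad dv \<longleftrightarrow>
     finite S \<and> (\<forall>z\<in>S. beta z > 0) \<and>
     (\<forall>w v. dip S beta (dv w) v = - dvip S beta w (grad v)) \<and>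
     (\<forall>z\<in>S. grad (\<lambda>_. 1) z = 0)"

definition dlap :: "('d gfun \<Rightarrow> 'd vfun) \<Rightarrow> ('d vfun \<Rightarrow> 'd gfun) \<Rightarrow> 'd gfun \<Rightarrow> 'd gfun" where
  "dlap grad dv u = dv (grad u)"

definition eta :: "real \<Rightarrow> real \<Rightarrow> real" where
  "eta M r = r * (M - r) / M"

definition gfn :: "real \<Rightarrow> real \<Rightarrow> real" where
  "gfn M r = r * (M - r)"

definition gder :: "real \<Rightarrow> real \<Rightarrow> real" where
  "gder M r = M - 2 * r"

text \<open>Value at index n-1, with the convention s(-1) = s(0).\<close>
definition prv :: "(nat \<Rightarrow> 'a) \<Rightarrow> nat \<Rightarrow> 'a" where
  "prv s n = (if n = 0 then s 0 else s (n - 1))"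

definition energy :: "(real^'d) set \<Rightarrow> 'd gfun \<Rightarrow> ('d gfun \<Rightarrow> 'd vfun) \<Rightarrow> real \<Rightarrow> real
    \<Rightarrow> 'd gfun \<Rightarrow> 'd gfun \<Rightarrow> real" where
  "energy S beta grad M \<sigma> r c =
     dip S beta (\<lambda>z. r z * ln (r z + \<sigma>) + (M - r z) * ln (1 - r z / M + \<sigma>) - r z * c z
                     + (1/2) * (norm (grad c z))\<^sup>2) (\<lambda>_. 1)"

text \<open>Index conventions: rho n = rho_h^n, c n = c_h^n,
  ct n = tilde c_h^n, rt n = tilde rho_h^n, lam n = lambda_h^n, xi n = xi_h^n,
  th n = theta_h^{n+1/2}.\<close>
definition cn_scheme ::
  "(real^'d) set \<Rightarrow> 'd gfun \<Rightarrow> ('d gfun \<Rightarrow> 'd vfun) \<Rightarrow> ('d vfun \<Rightarrow> 'd gfun)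
   \<Rightarrow> real \<Rightarrow> real \<Rightarrow> real
   \<Rightarrow> (nat \<Rightarrow> 'd gfun) \<Rightarrow> (nat \<Rightarrow> 'd gfun) \<Rightarrow> (nat \<Rightarrow> 'd gfun) \<Rightarrow> (nat \<Rightarrow> 'd gfun)
   \<Rightarrow> (nat \<Rightarrow> 'd gfun) \<Rightarrow> (nat \<Rightarrow> real) \<Rightarrow> (nat \<Rightarrow> real) \<Rightarrow> nat \<Rightarrow> bool" where
  "cn_scheme S beta grad dv M \<sigma> dt rho c ct rt lam xi th m \<longleftrightarrow>
     \<comment> \<open>initialisation\<close>
     (\<forall>z\<in>S. 0 \<le> rho 0 z \<and> rho 0 z \<le> M) \<and>
     ct 0 = c 0 \<and> (\<forall>z\<in>S. lam 0 z = 0) \<and> xi 0 = 0 \<and>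
     (\<forall>n<m.
       \<comment> \<open>Step 1\<close>
       (\<forall>z\<in>S. (ct (Suc n) z - c n z) / dt
           = dlap grad dv (\<lambda>y. (ct (Suc n) y + c n y) / 2) z
             + 3/2 * rho n z - 1/2 * prv rho n z) \<and>
       \<comment> \<open>Step 2\<close>
       (\<forall>z\<in>S. (rt (Suc n) z - rho n z) / dt
           = dlap grad dv (\<lambda>y. (rt (Suc n) y + rho n y) / 2) z
             - dv (\<lambda>y. eta M (3/2 * rho n y - 1/2 * prv rho n y)
                        *\<^sub>R grad (\<lambda>x. 3/2 * c n x - 1/2 * prv c n x) y) z
             + lam n z * gder M (rho n z) + xi n) \<and>
       \<comment> \<open>Step 3\<close>
       (\<forall>z\<in>S. (rho (Suc n) z - rt (Suc n) z) / dt
           = (lam (Suc n) z * gder M (rho (Suc n) z) + xi (Suc n)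
              - lam n z * gder M (rho n z) - xi n) / 2 \<and>
         gfn M (rho (Suc n) z) \<ge> 0 \<and> lam (Suc n) z \<ge> 0 \<and>
         lam (Suc n) z * gfn M (rho (Suc n) z) = 0) \<and>
       dip S beta (rho (Suc n)) (\<lambda>_. 1) = dip S beta (rho 0) (\<lambda>_. 1) \<and>
       \<comment> \<open>Step 4\<close>
       (\<forall>z\<in>S. (c (Suc n) z - ct (Suc n) z) / dt = th n) \<and>
       (energy S beta grad M \<sigma> (rho (Suc n)) (c (Suc n)) - energy S beta grad M \<sigma> (rho n) (c n)) / dt
         = - dip S beta
               (\<lambda>z. eta M ((rho (Suc n) z + rho n z) / 2)
                    * (norm (grad (\<lambda>y. ln ((rho (Suc n) y + rho n y) / 2 + \<sigma>)
                                        - (ct (Suc n) y + c n y) / 2) z))\<^sup>2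
                    + ((ct (Suc n) z - ct n z) / dt)\<^sup>2)
               (\<lambda>_. 1))"

end

theory Submission
  imports Defs
begin

text \<open>
  Test step 1 with the discrete Laplacian of the midpoint \<open>c\<close>: summation by parts, and the
  fact that step 4 only shifts \<open>c\<close> by a constant, bound \<open>|\<nabla>c^{n+1}|^2 + dt |\<Delta>c^{n+1/2}|^2\<close> by
  \<open>|\<nabla>c^n|^2\<close> plus \<open>dt\<close> times the squares of the extrapolated density.
  Test step 2 with the midpoint density. Step 3 says that \<open>\<rho> - dt/2 q\<close>, where
  \<open>q^k = \<lambda>^k g'(\<rho>^k) + \<xi>^k\<close> is the Lagrange multiplier, takes the same value at
  \<open>\<rho>^{n+1}\<close> with \<open>q^{n+1}\<close> as at the intermediate density with \<open>q^n\<close>; this turns the tested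
  identity into a bound for \<open>|\<rho>^{n+1}|^2 + dt^2/4 |q^{n+1}|^2\<close> up to the terms
  \<open>dt [q^k, \<rho>^k]\<close>. Those are nonpositive: mass conservation gives \<open>q^k\<close> zero mean, and
  \<open>\<lambda>^k > 0\<close> only where \<open>\<rho>^k \<in> {0, M}\<close>, where \<open>g'\<close> points back to the mean of \<open>\<rho>^k\<close>.
  The chemotactic flux is controlled because \<open>0 \<le> \<rho> \<le> M\<close> keeps the mobility of the
  extrapolated density below \<open>3M/4\<close>. The two estimates give a two-step recursion for the
  stability functional, and a discrete Gronwall argument yields the constant
  \<open>exp (2 K T)\<close> with \<open>K = stability_rate M\<close>.
\<close>

lemma norm_extrapolation_le:
  fixes a b :: "'a::real_inner"
  shows "(norm ((3/2) *\<^sub>R a - (1/2) *\<^sub>R b))\<^sup>2 \<le> 9/2 * (norm a)\<^sup>2 + 1/2 * (norm b)\<^sup>2"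
proof -
  have "0 \<le> (norm ((3/2) *\<^sub>R a + (1/2) *\<^sub>R b))\<^sup>2" by simp
  then show ?thesis
    by (simp add: power2_norm_eq_inner inner_diff_left inner_diff_right inner_add_left
        inner_add_right inner_commute algebra_simps)
qed

lemma gfn_nonneg_imp_bounds:
  assumes "M > 0" and "gfn M r \<ge> 0"
  shows "0 \<le> r \<and> r \<le> M"
proof (rule ccontr)
  assume "\<not> (0 \<le> r \<and> r \<le> M)"
  then have "r * (M - r) < 0"
    using assms(1) by (auto simp: mult_neg_pos mult_pos_neg)
  then show False using assms(2) unfolding gfn_def by linarith
qed

lemma eta_extrapolation_bound:
  assumes "M > 0" "0 \<le> a" "a \<le> M" "0 \<le> b" "b \<le> M"
  shows "(eta M (3/2 * a - 1/2 * b))\<^sup>2 \<le> 9 * M\<^sup>2 / 16"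
proof -
  define r where "r = 3/2 * a - 1/2 * b"
  have "r * (M - r) \<le> M\<^sup>2 / 4"
    using zero_le_power2[of "r - M/2"] by (simp add: power2_eq_square algebra_simps)
  moreover have "- (3 * M\<^sup>2 / 4) \<le> r * (M - r)"
  proof -
    have "0 \<le> (r + M/2) * (3*M/2 - r)"
      using assms unfolding r_def by (intro mult_nonneg_nonneg) linarith+
    then show ?thesis by (simp add: power2_eq_square algebra_simps)
  qed
  ultimately have "\<bar>r * (M - r)\<bar> \<le> 3 * M\<^sup>2 / 4"
    using assms(1) by (simp add: abs_le_iff)
  then have "\<bar>eta M r\<bar> \<le> 3 * M / 4"
    using assms(1) by (simp add: eta_def abs_divide power2_eq_square divide_le_eq)
  then have "(eta M r)\<^sup>2 \<le> (3 * M / 4)\<^sup>2"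
    by (metis abs_ge_zero power2_abs power_mono)
  then show ?thesis unfolding r_def by (simp add: power2_eq_square)
qed

text \<open>Where the multiplier is active the state sits on the boundary \<open>{0, M}\<close>, and there
  \<open>g'\<close> points back into \<open>[0, M]\<close>.\<close>

lemma multiplier_term_nonpos:
  fixes l r a M :: real
  assumes "0 \<le> l" "l * gfn M r = 0" "0 \<le> a" "a \<le> M"
  shows "l * gder M r * (r - a) \<le> 0"
proof (cases "l = 0")
  case False
  then have "r = 0 \<or> r = M" using assms(2) unfolding gfn_def by auto
  then show ?thesis
    using assms mult_nonneg_nonneg[of "l * M" a] mult_nonneg_nonneg[of "l * M" "M - a"]
    unfolding gder_def by (auto simp: algebra_simps)
qed simp

(* Also for n = 0, by truncated subtraction. *)
lemma prv_eq: "prv s n = s (n - 1)"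
  unfolding prv_def by simp

lemma dip_commute: "dip S beta u v = dip S beta v u"
  unfolding dip_def by (simp add: mult.commute mult.left_commute)

lemma dip_cong:
  "(\<And>z. z \<in> S \<Longrightarrow> u z = u' z) \<Longrightarrow> (\<And>z. z \<in> S \<Longrightarrow> v z = v' z)
    \<Longrightarrow> dip S beta u v = dip S beta u' v'"
  unfolding dip_def by (rule sum.cong) auto

lemma dvip_cong:
  "(\<And>z. z \<in> S \<Longrightarrow> w z = w' z) \<Longrightarrow> (\<And>z. z \<in> S \<Longrightarrow> v z = v' z)
    \<Longrightarrow> dvip S beta w v = dvip S beta w' v'"
  unfolding dvip_def by (rule sum.cong) auto

lemma dip_add_left: "dip S beta (\<lambda>z. u z + v z) w = dip S beta u w + dip S beta v w"
  unfolding dip_def by (simp add: algebra_simps sum.distrib)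

lemma dip_diff_left: "dip S beta (\<lambda>z. u z - v z) w = dip S beta u w - dip S beta v w"
  unfolding dip_def by (simp add: algebra_simps sum_subtractf)

lemma dip_mult_left: "dip S beta (\<lambda>z. a * u z) v = a * dip S beta u v"
  unfolding dip_def by (simp add: algebra_simps sum_distrib_left)

lemma dip_const_left: "dip S beta (\<lambda>_. a) v = a * dip S beta v (\<lambda>_. 1)"
  unfolding dip_def by (simp add: algebra_simps sum_distrib_left)

lemma dip_times_one: "dip S beta (\<lambda>z. u z * v z) (\<lambda>_. 1) = dip S beta u v"
  unfolding dip_def by (simp add: mult.assoc)

lemma dip_midpoint_diff:
  "dip S beta (\<lambda>z. u z - v z) (\<lambda>z. (u z + v z) / 2) = 1/2 * dip S beta u u - 1/2 * dip S beta v v"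
  unfolding dip_def by (simp add: sum_subtractf sum_distrib_left algebra_simps add_divide_distrib)

lemma dip_midpoint_right:
  "dip S beta w (\<lambda>z. (u z + v z) / 2) = 1/2 * dip S beta w u + 1/2 * dip S beta w v"
  unfolding dip_def by (simp add: sum.distrib sum_distrib_left algebra_simps add_divide_distrib)

lemma dip_square_diff:
  "dip S beta (\<lambda>z. u z - s * p z) (\<lambda>z. u z - s * p z)
    = dip S beta u u - 2 * s * dip S beta p u + s\<^sup>2 * dip S beta p p"
  unfolding dip_def
  by (simp add: sum_subtractf sum.distrib sum_distrib_left algebra_simps power2_eq_square)

lemma dip_one_nonneg:
  assumes "\<forall>z\<in>S. beta z > 0" and "\<And>z. z \<in> S \<Longrightarrow> 0 \<le> f z"
  shows "0 \<le> dip S beta f (\<lambda>_. 1)"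
  unfolding dip_def using assms by (intro sum_nonneg) (simp add: less_imp_le)

lemma dip_self_nonneg: "\<forall>z\<in>S. beta z > 0 \<Longrightarrow> 0 \<le> dip S beta u u"
  using dip_one_nonneg[of S beta "\<lambda>z. u z * u z"] by (simp add: dip_times_one)

lemma dvip_self_nonneg: "\<forall>z\<in>S. beta z > 0 \<Longrightarrow> 0 \<le> dvip S beta w w"
  unfolding dvip_def by (intro sum_nonneg) (simp add: less_imp_le)

lemma dnorm_power2: "\<forall>z\<in>S. beta z > 0 \<Longrightarrow> (dnorm S beta u)\<^sup>2 = dip S beta u u"
  unfolding dnorm_def using dip_self_nonneg by simp

lemma dvnorm_power2: "\<forall>z\<in>S. beta z > 0 \<Longrightarrow> (dvnorm S beta w)\<^sup>2 = dvip S beta w w"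
  unfolding dvnorm_def using dvip_self_nonneg by simp

lemma dip_young:
  assumes "\<forall>z\<in>S. beta z > 0"
  shows "\<bar>2 * dip S beta u v\<bar> \<le> dip S beta u u + dip S beta v v"
proof -
  have "\<bar>2 * dip S beta u v\<bar> \<le> (\<Sum>z\<in>S. \<bar>2 * (beta z * u z * v z)\<bar>)"
    unfolding dip_def sum_distrib_left by (rule sum_abs)
  also have "\<dots> \<le> (\<Sum>z\<in>S. beta z * u z * u z + beta z * v z * v z)"
  proof (rule sum_mono)
    fix z assume "z \<in> S"
    then have "beta z > 0" using assms by blast
    moreover have "\<bar>2 * (u z * v z)\<bar> \<le> u z * u z + v z * v z"
      using sum_squares_bound[of "u z" "v z"] sum_squares_bound[of "u z" "- v z"]
      by (simp add: abs_le_iff algebra_simps power2_eq_square)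
    ultimately show "\<bar>2 * (beta z * u z * v z)\<bar> \<le> beta z * u z * u z + beta z * v z * v z"
    proof -
      have "\<bar>2 * (beta z * u z * v z)\<bar> = beta z * \<bar>2 * (u z * v z)\<bar>"
        using \<open>beta z > 0\<close> by (simp add: abs_mult)
      also have "\<dots> \<le> beta z * (u z * u z + v z * v z)"
        using \<open>beta z > 0\<close> \<open>\<bar>2 * (u z * v z)\<bar> \<le> _\<close> by (intro mult_left_mono) simp_all
      finally show ?thesis by (simp add: distrib_left mult.assoc)
    qed
  qed
  finally show ?thesis unfolding dip_def by (simp add: sum.distrib)
qed

lemma dip_extrapolation_le:
  assumes "\<forall>z\<in>S. beta z > 0"
  shows "dip S beta (\<lambda>z. 3/2 * u z - 1/2 * v z) (\<lambda>z. 3/2 * u z - 1/2 * v z)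
    \<le> 9/2 * dip S beta u u + 1/2 * dip S beta v v"
  unfolding dip_def sum_distrib_left sum.distrib[symmetric]
proof (rule sum_mono)
  fix z assume "z \<in> S"
  then have "beta z > 0" using assms by blast
  moreover have "(3/2 * u z - 1/2 * v z)\<^sup>2 \<le> 9/2 * (u z)\<^sup>2 + 1/2 * (v z)\<^sup>2"
    using norm_extrapolation_le[of "u z" "v z"] by simp
  ultimately show "beta z * (3/2 * u z - 1/2 * v z) * (3/2 * u z - 1/2 * v z)
      \<le> 9/2 * (beta z * u z * u z) + 1/2 * (beta z * v z * v z)"
    using mult_left_mono[of _ _ "beta z"] by (fastforce simp: power2_eq_square algebra_simps)
qed

lemma dvip_young:
  assumes "\<forall>z\<in>S. beta z > 0"
  shows "2 * dvip S beta v w \<le> dvip S beta v v + dvip S beta w w"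
  unfolding dvip_def sum_distrib_left sum.distrib[symmetric]
proof (rule sum_mono)
  fix z assume "z \<in> S"
  then have "beta z > 0" using assms by blast
  moreover have "2 * (v z \<bullet> w z) \<le> v z \<bullet> v z + w z \<bullet> w z"
    using inner_ge_zero[of "v z - w z"] by (simp add: inner_diff_left inner_diff_right inner_commute)
  ultimately show "2 * (beta z * (v z \<bullet> w z)) \<le> beta z * (v z \<bullet> v z) + beta z * (w z \<bullet> w z)"
    by (simp flip: distrib_left)
qed

lemma dvip_diff_right: "dvip S beta w (\<lambda>z. v z - v' z) = dvip S beta w v - dvip S beta w v'"
  unfolding dvip_def by (simp add: inner_diff_right algebra_simps sum_subtractf)

lemma dvip_linear_right:
  "dvip S beta w (\<lambda>z. a *\<^sub>R v z + b *\<^sub>R v' z) = a * dvip S beta w v + b * dvip S beta w v'"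
  unfolding dvip_def by (simp add: inner_add_right algebra_simps sum.distrib sum_distrib_left)

lemma dvip_midpoint_diff:
  "dvip S beta (\<lambda>z. (1/2) *\<^sub>R (v z + w z)) (\<lambda>z. v z - w z)
    = 1/2 * dvip S beta v v - 1/2 * dvip S beta w w"
  unfolding dvip_def
  by (simp add: inner_add_left inner_diff_right inner_commute sum_subtractf sum_distrib_left
      algebra_simps)

lemma dvip_eq_on_nodes:
  assumes "finite S" and "\<forall>z\<in>S. beta z > 0"
    and "\<And>w. dvip S beta w v = dvip S beta w v'" and "z \<in> S"
  shows "v z = v' z"
proof -
  let ?d = "\<lambda>z. v z - v' z"
  have "dvip S beta ?d ?d = dvip S beta ?d v - dvip S beta ?d v'"
    by (rule dvip_diff_right)
  then have "(\<Sum>y\<in>S. beta y * (?d y \<bullet> ?d y)) = 0"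
    using assms(3) unfolding dvip_def by simp
  then have "beta z * (?d z \<bullet> ?d z) = 0"
    using assms by (subst (asm) sum_nonneg_eq_0_iff) (auto simp: less_imp_le)
  moreover have "beta z > 0" using assms(2,4) by blast
  ultimately show ?thesis by simp
qed

section \<open>Discrete calculus from summation by parts\<close>

locale disc_calculus =
  fixes S :: "(real^'d) set" and beta :: "'d gfun"
    and grad :: "'d gfun \<Rightarrow> 'd vfun" and dv :: "'d vfun \<Rightarrow> 'd gfun"
  assumes setting: "disc_setting S beta grad dv"
begin


lemma finite_nodes: "finite S"
  using setting unfolding disc_setting_def by blast

lemma weights_pos: "\<forall>z\<in>S. beta z > 0"
  using setting unfolding disc_setting_def by blast

lemma summation_by_parts: "dvip S beta w (grad v) = - dip S beta (dv w) v"
  using setting unfolding disc_setting_def by simp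

lemma grad_one: "z \<in> S \<Longrightarrow> grad (\<lambda>_. 1) z = 0"
  using setting unfolding disc_setting_def by blast

text \<open>Linearity and locality of \<open>grad\<close> are not assumed: they follow from summation by
  parts, because the weighted inner product is nondegenerate on the nodes.\<close>

lemma grad_eq_on_nodes:
  assumes "\<And>w. dip S beta (dv w) u = dip S beta (dv w) v" and "z \<in> S"
  shows "grad u z = grad v z"
  using dvip_eq_on_nodes[OF finite_nodes weights_pos _ assms(2)] assms(1)
  by (simp add: summation_by_parts)

lemma grad_cong: "(\<And>y. y \<in> S \<Longrightarrow> u y = v y) \<Longrightarrow> z \<in> S \<Longrightarrow> grad u z = grad v z"
  by (rule grad_eq_on_nodes) (auto intro: dip_cong)

lemma grad_linear:
  assumes "z \<in> S"
  shows "grad (\<lambda>y. a * u y + b * v y) z = a *\<^sub>R grad u z + b *\<^sub>R grad v z"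
proof -
  have "dvip S beta w (grad (\<lambda>y. a * u y + b * v y))
      = dvip S beta w (\<lambda>z. a *\<^sub>R grad u z + b *\<^sub>R grad v z)" for w
    unfolding summation_by_parts dvip_linear_right
    by (simp add: dip_commute[of _ _ "dv w"] dip_add_left dip_mult_left)
  from dvip_eq_on_nodes[OF finite_nodes weights_pos this assms] show ?thesis by simp
qed

lemma grad_add_const: "z \<in> S \<Longrightarrow> grad (\<lambda>y. u y + k) z = grad u z"
  using grad_linear[of z 1 u k "\<lambda>_. 1"] by (simp add: grad_one)

lemma grad_midpoint:
  "z \<in> S \<Longrightarrow> grad (\<lambda>y. (u y + v y) / 2) z = (1/2) *\<^sub>R (grad u z + grad v z)"
  using grad_linear[of z "1/2" u "1/2" v] by (simp add: add_divide_distrib scaleR_right_distrib)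

lemma grad_diff: "z \<in> S \<Longrightarrow> grad (\<lambda>y. u y - v y) z = grad u z - grad v z"
  using grad_linear[of z 1 u "-1" v] by simp

lemma grad_extrapolation:
  "z \<in> S \<Longrightarrow> grad (\<lambda>y. 3/2 * u y - 1/2 * v y) z = (3/2) *\<^sub>R grad u z - (1/2) *\<^sub>R grad v z"
  using grad_linear[of z "3/2" u "-1/2" v] by simp

lemma div_mean_zero: "dip S beta (dv w) (\<lambda>_. 1) = 0"
  using summation_by_parts[of w "\<lambda>_. 1"] grad_one by (simp add: dvip_def)

lemma dip_dlap: "dip S beta (dlap grad dv u) v = - dvip S beta (grad u) (grad v)"
  unfolding dlap_def by (simp add: summation_by_parts)

end

section \<open>Sign of the Lagrange multiplier\<close>

text \<open>Because the multiplier has zero mean, pairing it with \<open>r\<close> is the same as pairing it with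
  \<open>r - a\<close> for the mean \<open>a \<in> [0, M]\<close> of \<open>r\<close>, which is then nonpositive nodewise.\<close>

lemma multiplier_pairing_nonpos:
  assumes fin: "finite S" and pos: "\<forall>z\<in>S. beta z > 0"
    and compl: "\<And>z. z \<in> S \<Longrightarrow> 0 \<le> l z \<and> l z * gfn M (r z) = 0 \<and> 0 \<le> r z \<and> r z \<le> M"
    and mean: "dip S beta (\<lambda>z. l z * gder M (r z) + x) (\<lambda>_. 1) = 0"
  shows "dip S beta (\<lambda>z. l z * gder M (r z) + x) r \<le> 0"
proof (cases "S = {}")
  case True then show ?thesis by (simp add: dip_def)
next
  case False
  define q where "q = (\<lambda>z. l z * gder M (r z) + x)"
  define W where "W = dip S beta (\<lambda>_. 1) (\<lambda>_. 1)"
  define a where "a = dip S beta r (\<lambda>_. 1) / W"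
  have "W > 0" unfolding W_def dip_def using pos by (intro sum_pos[OF fin False]) auto
  then have mean_r: "dip S beta (\<lambda>_. a) (\<lambda>_. 1) = dip S beta r (\<lambda>_. 1)"
    unfolding dip_const_left[where a=a] W_def[symmetric] by (simp add: a_def)
  have "0 \<le> dip S beta r (\<lambda>_. 1)"
    using compl by (intro dip_one_nonneg[OF pos]) blast
  moreover have "dip S beta r (\<lambda>_. 1) \<le> M * W"
    unfolding W_def dip_def sum_distrib_left
    using compl pos by (intro sum_mono) (simp add: mult_left_mono less_imp_le)
  ultimately have a_bounds: "0 \<le> a" "a \<le> M"
    using \<open>W > 0\<close> unfolding a_def by (simp_all add: pos_divide_le_eq)
  have "dip S beta q r = dip S beta (\<lambda>z. r z - a) q + a * dip S beta q (\<lambda>_. 1)"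
    by (simp add: dip_commute[of S beta q r] dip_diff_left dip_const_left[where a=a])
  also have "\<dots> = dip S beta q (\<lambda>z. r z - a)"
    using mean unfolding q_def by (simp add: dip_commute)
  also have "\<dots> = dip S beta (\<lambda>z. l z * gder M (r z) * (r z - a)) (\<lambda>_. 1)
      + x * dip S beta (\<lambda>z. r z - a) (\<lambda>_. 1)"
    unfolding q_def dip_add_left dip_const_left dip_times_one ..
  also have "\<dots> \<le> 0"
  proof -
    have "dip S beta (\<lambda>z. r z - a) (\<lambda>_. 1) = 0"
      using mean_r by (simp add: dip_diff_left)
    moreover have "dip S beta (\<lambda>z. - (l z * gder M (r z) * (r z - a))) (\<lambda>_. 1) \<ge> 0"
      using compl a_bounds multiplier_term_nonpos by (intro dip_one_nonneg[OF pos]) (simp add: neg_le_0_iff_le)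
    ultimately show ?thesis
      using dip_mult_left[of S beta "-1"] by simp
  qed
  finally show ?thesis unfolding q_def .
qed

section \<open>A two-step discrete Gronwall inequality\<close>

lemma discrete_gronwall_two_step:
  fixes P a :: "nat \<Rightarrow> real" and h :: real
  assumes "h \<ge> 0" and "P 0 \<ge> 0" and "\<And>k. k \<le> m \<Longrightarrow> a k \<le> P k"
    and step: "\<And>n. n < m \<Longrightarrow> P (Suc n) \<le> P n + h * (a n + a (n - 1))"
  shows "k \<le> m \<Longrightarrow> P k \<le> (1 + 2 * h) ^ k * P 0"
proof (induction k rule: less_induct)
  case (less k)
  show ?case
  proof (cases k)
    case (Suc n)
    define B where "B = (1 + 2 * h) ^ n * P 0"
    have "(1 + 2 * h) ^ (n - 1) * P 0 \<le> B"
      unfolding B_def using assms(1,2) by (intro mult_right_mono power_increasing) auto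
    moreover have "P (n - 1) \<le> (1 + 2 * h) ^ (n - 1) * P 0" "P n \<le> B"
      using less Suc unfolding B_def by simp_all
    moreover have "n \<le> m" "n - 1 \<le> m" using less.prems Suc by simp_all
    ultimately have "a n \<le> B" "a (n - 1) \<le> B" "P n \<le> B"
      using assms(3) by (meson order_trans)+
    then have "h * (a n + a (n - 1)) \<le> h * (B + B)"
      using assms(1) by (intro mult_left_mono) simp_all
    then have "P (Suc n) \<le> B + h * (B + B)"
      using step[of n] less.prems Suc \<open>P n \<le> B\<close> by simp
    then show ?thesis unfolding Suc B_def by (simp add: algebra_simps)
  qed simp
qed

section \<open>Stability of the scheme\<close>

definition stability_rate :: "real \<Rightarrow> real" where
  "stability_rate M = 9/2 * (1 + 9 * M\<^sup>2 / 16)"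

locale cn_solution = disc_calculus S beta grad dv
  for S :: "(real^'d) set" and beta grad dv +
  fixes M \<sigma> dt :: real and rho c ct rt lam :: "nat \<Rightarrow> 'd gfun" and xi th :: "nat \<Rightarrow> real"
    and m :: nat
  assumes M_pos: "M > 0" and dt_pos: "dt > 0"
    and scheme: "cn_scheme S beta grad dv M \<sigma> dt rho c ct rt lam xi th m"
begin

abbreviation multiplier :: "nat \<Rightarrow> 'd gfun" where
  "multiplier k \<equiv> \<lambda>z. lam k z * gder M (rho k z) + xi k"

abbreviation flux :: "nat \<Rightarrow> 'd vfun" where
  "flux n \<equiv> \<lambda>y. eta M (3/2 * rho n y - 1/2 * prv rho n y)
                  *\<^sub>R grad (\<lambda>x. 3/2 * c n x - 1/2 * prv c n x) y"

abbreviation c_mid :: "nat \<Rightarrow> 'd gfun" where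
  "c_mid n \<equiv> \<lambda>z. (ct (Suc n) z + c n z) / 2"

abbreviation rho_mid :: "nat \<Rightarrow> 'd gfun" where
  "rho_mid n \<equiv> \<lambda>z. (rt (Suc n) z + rho n z) / 2"

lemma divide_dt_eq: "x / dt = y \<longleftrightarrow> x = dt * y"
  using dt_pos by (auto simp: divide_eq_eq)

lemma initial_rho: "z \<in> S \<Longrightarrow> 0 \<le> rho 0 z \<and> rho 0 z \<le> M"
  and initial_multiplier: "z \<in> S \<Longrightarrow> multiplier 0 z = 0"
  using scheme unfolding cn_scheme_def by auto

lemma step1:
  "n < m \<Longrightarrow> z \<in> S \<Longrightarrow>
    ct (Suc n) z - c n z = dt * (dlap grad dv (c_mid n) z + (3/2 * rho n z - 1/2 * prv rho n z))"
  using scheme unfolding cn_scheme_def divide_dt_eq by (simp add: add.assoc)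

lemma step2:
  "n < m \<Longrightarrow> z \<in> S \<Longrightarrow>
    rt (Suc n) z - rho n z = dt * (dlap grad dv (rho_mid n) z - dv (flux n) z + multiplier n z)"
  using scheme unfolding cn_scheme_def divide_dt_eq by (simp add: add.assoc diff_add_eq)

lemma step3:
  assumes "n < m" "z \<in> S"
  shows "rho (Suc n) z - dt/2 * multiplier (Suc n) z = rt (Suc n) z - dt/2 * multiplier n z"
proof -
  have "(rho (Suc n) z - rt (Suc n) z) / dt = (multiplier (Suc n) z - multiplier n z) / 2"
    using scheme assms unfolding cn_scheme_def by (simp add: diff_diff_eq add_diff_eq)
  then show ?thesis unfolding divide_dt_eq by (simp add: algebra_simps)
qed

lemma step3_complementarity:
  "n < m \<Longrightarrow> z \<in> S \<Longrightarrow>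
    gfn M (rho (Suc n) z) \<ge> 0 \<and> lam (Suc n) z \<ge> 0 \<and> lam (Suc n) z * gfn M (rho (Suc n) z) = 0"
  using scheme unfolding cn_scheme_def by blast

lemma step3_mass: "n < m \<Longrightarrow> dip S beta (rho (Suc n)) (\<lambda>_. 1) = dip S beta (rho 0) (\<lambda>_. 1)"
  using scheme unfolding cn_scheme_def by blast

lemma step4: "n < m \<Longrightarrow> z \<in> S \<Longrightarrow> c (Suc n) z = ct (Suc n) z + dt * th n"
  using scheme unfolding cn_scheme_def divide_dt_eq by (simp add: algebra_simps)

lemma multiplier_complementarity:
  "k \<le> m \<Longrightarrow> z \<in> S \<Longrightarrow> 0 \<le> lam k z \<and> lam k z * gfn M (rho k z) = 0"
  using scheme step3_complementarity by (cases k) (auto simp: cn_scheme_def)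

lemma rho_bounds: "k \<le> m \<Longrightarrow> z \<in> S \<Longrightarrow> 0 \<le> rho k z \<and> rho k z \<le> M"
  using initial_rho step3_complementarity gfn_nonneg_imp_bounds[OF M_pos]
  by (cases k) auto

lemma prv_rho_bounds: "n \<le> m \<Longrightarrow> z \<in> S \<Longrightarrow> 0 \<le> prv rho n z \<and> prv rho n z \<le> M"
  unfolding prv_eq using rho_bounds[of "n - 1"] by simp

lemma mass_conservation: "k \<le> m \<Longrightarrow> dip S beta (rho k) (\<lambda>_. 1) = dip S beta (rho 0) (\<lambda>_. 1)"
  using step3_mass by (cases k) auto

text \<open>Adding steps 2 and 3 gives \<open>\<rho>^{n+1} - \<rho>^n = dt (\<Delta>(\<dots>) - div(\<dots>) + (q^n + q^{n+1})/2)\<close>;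
  mass conservation and the zero mean of divergences leave \<open>[q^{n+1}, 1] = - [q^n, 1]\<close>.\<close>

lemma multiplier_mean_zero: "k \<le> m \<Longrightarrow> dip S beta (multiplier k) (\<lambda>_. 1) = 0"
proof (induction k)
  case 0
  then show ?case by (simp add: dip_def initial_multiplier)
next
  case (Suc n)
  then have n: "n < m" by simp
  have "rho (Suc n) z - rho n z = dt * dlap grad dv (rho_mid n) z - dt * dv (flux n) z
      + dt/2 * multiplier n z + dt/2 * multiplier (Suc n) z" if "z \<in> S" for z
    using step2[OF n that] step3[OF n that] by (simp add: algebra_simps)
  then have "dip S beta (\<lambda>z. rho (Suc n) z - rho n z) (\<lambda>_. 1)
      = dip S beta (\<lambda>z. dt * dlap grad dv (rho_mid n) z - dt * dv (flux n) z
          + dt/2 * multiplier n z + dt/2 * multiplier (Suc n) z) (\<lambda>_. 1)"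
    by (intro dip_cong) simp_all
  also have "\<dots> = dt * dip S beta (dlap grad dv (rho_mid n)) (\<lambda>_. 1)
        - dt * dip S beta (dv (flux n)) (\<lambda>_. 1)
        + dt/2 * dip S beta (multiplier n) (\<lambda>_. 1) + dt/2 * dip S beta (multiplier (Suc n)) (\<lambda>_. 1)"
    by (simp only: dip_add_left dip_diff_left dip_mult_left)
  finally have "dip S beta (\<lambda>z. rho (Suc n) z - rho n z) (\<lambda>_. 1) = \<dots>" .
  then show ?case
    using Suc mass_conservation[of n] mass_conservation[of "Suc n"] dt_pos
    by (simp add: dip_diff_left div_mean_zero dlap_def)
qed

lemma multiplier_rho_nonpos: "k \<le> m \<Longrightarrow> dip S beta (multiplier k) (rho k) \<le> 0"
  using multiplier_complementarity rho_bounds multiplier_mean_zero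
  by (intro multiplier_pairing_nonpos[OF finite_nodes weights_pos]) auto

lemma grad_c_Suc: "n < m \<Longrightarrow> z \<in> S \<Longrightarrow> grad (c (Suc n)) z = grad (ct (Suc n)) z"
  using grad_cong[of "c (Suc n)" "\<lambda>y. ct (Suc n) y + dt * th n"] step4 grad_add_const by simp

abbreviation grad_energy :: "nat \<Rightarrow> real" where
  "grad_energy k \<equiv> dvip S beta (grad (c k)) (grad (c k))"

lemma c_step_estimate:
  assumes n: "n < m"
  shows "grad_energy (Suc n) + dt * dip S beta (dlap grad dv (c_mid n)) (dlap grad dv (c_mid n))
    \<le> grad_energy n + dt * (9/2 * dip S beta (rho n) (rho n) + 1/2 * dip S beta (prv rho n) (prv rho n))"
proof -
  define D where "D = dlap grad dv (c_mid n)"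
  define f where "f = (\<lambda>z. 3/2 * rho n z - 1/2 * prv rho n z)"
  have "ct (Suc n) z - c n z = dt * D z + dt * f z" if "z \<in> S" for z
    using step1[OF n that] unfolding D_def f_def by (simp only: distrib_left)
  then have "dip S beta D (\<lambda>z. ct (Suc n) z - c n z) = dip S beta D (\<lambda>z. dt * D z + dt * f z)"
    by (intro dip_cong) simp_all
  then have "dip S beta D (\<lambda>z. ct (Suc n) z - c n z) = dt * dip S beta D D + dt * dip S beta D f"
    unfolding dip_commute[of S beta D "\<lambda>z. dt * D z + dt * f z"] dip_add_left dip_mult_left
    by (simp only: dip_commute)
  moreover have "dip S beta D (\<lambda>z. ct (Suc n) z - c n z)
      = - (1/2 * grad_energy (Suc n) - 1/2 * grad_energy n)"
  proof -
    have "dvip S beta (grad (c_mid n)) (grad (\<lambda>z. ct (Suc n) z - c n z))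
        = dvip S beta (\<lambda>z. (1/2) *\<^sub>R (grad (ct (Suc n)) z + grad (c n) z))
            (\<lambda>z. grad (ct (Suc n)) z - grad (c n) z)"
      by (intro dvip_cong) (simp_all add: grad_midpoint grad_diff)
    also have "\<dots> = 1/2 * grad_energy (Suc n) - 1/2 * grad_energy n"
      unfolding dvip_midpoint_diff by (simp only: dvip_cong[OF grad_c_Suc[OF n] grad_c_Suc[OF n]])
    finally show ?thesis unfolding D_def dip_dlap by (simp only:)
  qed
  moreover have "\<bar>2 * dip S beta D f\<bar> \<le> dip S beta D D + dip S beta f f"
    by (rule dip_young[OF weights_pos])
  moreover have "dip S beta f f \<le> 9/2 * dip S beta (rho n) (rho n) + 1/2 * dip S beta (prv rho n) (prv rho n)"
    unfolding f_def by (rule dip_extrapolation_le[OF weights_pos])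
  ultimately have "dt * (- 2 * dip S beta D f)
      \<le> dt * (dip S beta D D + 9/2 * dip S beta (rho n) (rho n) + 1/2 * dip S beta (prv rho n) (prv rho n))"
    using dt_pos by (intro mult_left_mono) (auto simp: abs_le_iff)
  with \<open>dip S beta D _ = dt * _ + _\<close> \<open>dip S beta D _ = - _\<close> show ?thesis
    unfolding D_def by (simp add: algebra_simps)
qed

lemma rho_step_identity:
  assumes n: "n < m"
  shows "dip S beta (rho (Suc n)) (rho (Suc n)) + dt\<^sup>2/4 * dip S beta (multiplier (Suc n)) (multiplier (Suc n))
      + 2 * dt * dvip S beta (grad (rho_mid n)) (grad (rho_mid n))
    = dip S beta (rho n) (rho n) + dt\<^sup>2/4 * dip S beta (multiplier n) (multiplier n)
      + 2 * dt * dvip S beta (flux n) (grad (rho_mid n))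
      + dt * (dip S beta (multiplier n) (rho n) + dip S beta (multiplier (Suc n)) (rho (Suc n)))"
proof -
  let ?r = "rt (Suc n)" and ?q = "multiplier n" and ?q' = "multiplier (Suc n)"
  have "dip S beta (\<lambda>z. ?r z - rho n z) (rho_mid n)
      = dip S beta (\<lambda>z. dt * dlap grad dv (rho_mid n) z - dt * dv (flux n) z + dt * ?q z) (rho_mid n)"
    using step2[OF n] by (intro dip_cong) (simp_all only: right_diff_distrib distrib_left)
  also have "\<dots> = - dt * dvip S beta (grad (rho_mid n)) (grad (rho_mid n))
      + dt * dvip S beta (flux n) (grad (rho_mid n)) + dt * dip S beta ?q (rho_mid n)"
    by (simp only: dip_add_left dip_diff_left dip_mult_left dip_dlap summation_by_parts)
  also have "dip S beta ?q (rho_mid n) = 1/2 * dip S beta ?q ?r + 1/2 * dip S beta ?q (rho n)"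
    by (rule dip_midpoint_right)
  finally have tested: "1/2 * dip S beta ?r ?r - 1/2 * dip S beta (rho n) (rho n)
      = - dt * dvip S beta (grad (rho_mid n)) (grad (rho_mid n))
        + dt * dvip S beta (flux n) (grad (rho_mid n))
        + dt * (1/2 * dip S beta ?q ?r + 1/2 * dip S beta ?q (rho n))"
    unfolding dip_midpoint_diff .
  have "dip S beta (\<lambda>z. rho (Suc n) z - dt/2 * ?q' z) (\<lambda>z. rho (Suc n) z - dt/2 * ?q' z)
      = dip S beta (\<lambda>z. ?r z - dt/2 * ?q z) (\<lambda>z. ?r z - dt/2 * ?q z)"
    using step3[OF n] by (intro dip_cong) simp_all
  then have "dip S beta (rho (Suc n)) (rho (Suc n)) - dt * dip S beta ?q' (rho (Suc n))
        + dt\<^sup>2/4 * dip S beta ?q' ?q'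
      = dip S beta ?r ?r - dt * dip S beta ?q ?r + dt\<^sup>2/4 * dip S beta ?q ?q"
    unfolding dip_square_diff by (simp add: power_divide)
  with tested show ?thesis by (simp add: algebra_simps)
qed

lemma flux_bound:
  assumes n: "n < m"
  shows "dvip S beta (flux n) (flux n)
    \<le> 9 * M\<^sup>2 / 16 * (9/2 * grad_energy n + 1/2 * grad_energy (n - 1))"
  unfolding dvip_def sum_distrib_left sum.distrib[symmetric]
proof (rule sum_mono)
  fix z assume z: "z \<in> S"
  let ?e = "eta M (3/2 * rho n z - 1/2 * prv rho n z)"
  let ?a = "grad (c n) z" and ?b = "grad (c (n - 1)) z"
  let ?w = "(3/2) *\<^sub>R ?a - (1/2) *\<^sub>R ?b"
  have "flux n z \<bullet> flux n z = ?e\<^sup>2 * (?w \<bullet> ?w)"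
    unfolding grad_extrapolation[OF z] prv_eq by (simp add: power2_eq_square)
  also have "\<dots> \<le> 9 * M\<^sup>2 / 16 * (9/2 * (?a \<bullet> ?a) + 1/2 * (?b \<bullet> ?b))"
    using eta_extrapolation_bound[OF M_pos] rho_bounds[of n z] prv_rho_bounds[of n z] n z
      norm_extrapolation_le[of ?a ?b]
    by (intro mult_mono) (simp_all add: power2_norm_eq_inner)
  finally show "beta z * (flux n z \<bullet> flux n z)
      \<le> 9 * M\<^sup>2 / 16 * (9/2 * (beta z * (?a \<bullet> ?a)) + 1/2 * (beta z * (?b \<bullet> ?b)))"
    using weights_pos z mult_left_mono[of _ _ "beta z"] by (fastforce simp: algebra_simps)
qed

lemma rho_step_estimate:
  assumes n: "n < m"
  shows "dip S beta (rho (Suc n)) (rho (Suc n)) + dt\<^sup>2/4 * dip S beta (multiplier (Suc n)) (multiplier (Suc n))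
      + dt * dvip S beta (grad (rho_mid n)) (grad (rho_mid n))
    \<le> dip S beta (rho n) (rho n) + dt\<^sup>2/4 * dip S beta (multiplier n) (multiplier n)
      + dt * (9 * M\<^sup>2 / 16 * (9/2 * grad_energy n + 1/2 * grad_energy (n - 1)))"
proof -
  have "2 * dvip S beta (flux n) (grad (rho_mid n))
      \<le> dvip S beta (grad (rho_mid n)) (grad (rho_mid n))
        + 9 * M\<^sup>2 / 16 * (9/2 * grad_energy n + 1/2 * grad_energy (n - 1))"
    using dvip_young[OF weights_pos, of "flux n" "grad (rho_mid n)"] flux_bound[OF n] by linarith
  then have "dt * (2 * dvip S beta (flux n) (grad (rho_mid n)))
      \<le> dt * (dvip S beta (grad (rho_mid n)) (grad (rho_mid n))
        + 9 * M\<^sup>2 / 16 * (9/2 * grad_energy n + 1/2 * grad_energy (n - 1)))"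
    using dt_pos by (intro mult_left_mono) simp_all
  moreover have "dt * (dip S beta (multiplier n) (rho n) + dip S beta (multiplier (Suc n)) (rho (Suc n)))
      \<le> 0"
    using multiplier_rho_nonpos[of n] multiplier_rho_nonpos[of "Suc n"] n dt_pos
    by (intro mult_nonneg_nonpos) simp_all
  ultimately show ?thesis
    using rho_step_identity[OF n] by (simp add: algebra_simps)
qed

definition state_energy :: "nat \<Rightarrow> real" where
  "state_energy k = dip S beta (rho k) (rho k) + grad_energy k"

definition stability_functional :: "nat \<Rightarrow> real" where
  "stability_functional k = dip S beta (rho k) (rho k) + grad_energy k
    + dt * (\<Sum>n<k. dip S beta (dlap grad dv (c_mid n)) (dlap grad dv (c_mid n)))
    + dt\<^sup>2/4 * dip S beta (multiplier k) (multiplier k)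
    + dt * (\<Sum>n<k. dvip S beta (grad (rho_mid n)) (grad (rho_mid n)))"

lemma state_energy_nonneg: "0 \<le> state_energy k"
  unfolding state_energy_def by (simp add: dip_self_nonneg[OF weights_pos] dvip_self_nonneg[OF weights_pos])

lemma state_energy_le_stability_functional: "state_energy k \<le> stability_functional k"
  unfolding state_energy_def stability_functional_def using dt_pos
  by (simp add: dip_self_nonneg[OF weights_pos] dvip_self_nonneg[OF weights_pos] sum_nonneg)

lemma stability_functional_0: "stability_functional 0 = state_energy 0"
  unfolding stability_functional_def state_energy_def by (simp add: dip_def initial_multiplier)

lemma stability_functional_step:
  assumes n: "n < m"
  shows "stability_functional (Suc n)
    \<le> stability_functional n + dt * stability_rate M * (state_energy n + state_energy (n - 1))"
proof -
  let ?R = "dip S beta (rho n) (rho n)" and ?R' = "dip S beta (rho (n - 1)) (rho (n - 1))"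
  let ?G = "grad_energy n" and ?G' = "grad_energy (n - 1)"
  define K where "K = 9 * M\<^sup>2 / 16"
  have "0 \<le> ?R" "0 \<le> ?R'" "0 \<le> ?G" "0 \<le> ?G'" "0 \<le> K"
    by (simp_all add: K_def dip_self_nonneg[OF weights_pos] dvip_self_nonneg[OF weights_pos])
  then have "0 \<le> 9/2 * K * ?R + (4 + 9/2 * K) * ?R' + 9/2 * ?G + (9/2 + 4 * K) * ?G'"
    by (intro add_nonneg_nonneg mult_nonneg_nonneg) simp_all
  moreover have "stability_rate M * (state_energy n + state_energy (n - 1))
      - (9/2 * ?R + 1/2 * ?R' + K * (9/2 * ?G + 1/2 * ?G'))
      = 9/2 * K * ?R + (4 + 9/2 * K) * ?R' + 9/2 * ?G + (9/2 + 4 * K) * ?G'"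
    unfolding stability_rate_def state_energy_def K_def by (simp add: algebra_simps)
  ultimately have "9/2 * ?R + 1/2 * ?R' + 9 * M\<^sup>2 / 16 * (9/2 * ?G + 1/2 * ?G')
      \<le> stability_rate M * (state_energy n + state_energy (n - 1))"
    unfolding K_def by linarith
  then have "dt * (9/2 * ?R + 1/2 * ?R' + 9 * M\<^sup>2 / 16 * (9/2 * ?G + 1/2 * ?G'))
      \<le> dt * stability_rate M * (state_energy n + state_energy (n - 1))"
    using mult_left_mono[OF _ less_imp_le[OF dt_pos]] by (simp only: mult.assoc)
  then show ?thesis
    using c_step_estimate[OF n] rho_step_estimate[OF n]
    unfolding stability_functional_def prv_eq by (simp add: algebra_simps)
qed

lemma stability_bound:
  assumes "real m * dt \<le> T"
  shows "stability_functional m \<le> exp (2 * stability_rate M * T) * stability_functional 0"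
proof -
  have rate: "0 \<le> stability_rate M" unfolding stability_rate_def by simp
  have "stability_functional m \<le> (1 + 2 * (dt * stability_rate M)) ^ m * stability_functional 0"
    using dt_pos rate state_energy_le_stability_functional stability_functional_step
      stability_functional_0 state_energy_nonneg
    by (intro discrete_gronwall_two_step[where a = state_energy and m = m]) (simp_all add: mult.assoc)
  also have "\<dots> \<le> exp (2 * (dt * stability_rate M)) ^ m * stability_functional 0"
    using dt_pos rate stability_functional_0 state_energy_nonneg
    by (intro mult_right_mono power_mono) simp_all
  also have "\<dots> \<le> exp (2 * stability_rate M * T) * stability_functional 0"
    using mult_right_mono[OF assms rate] stability_functional_0 state_energy_nonneg
    by (intro mult_right_mono) (simp_all add: exp_of_nat_mult[symmetric] algebra_simps)
  finally show ?thesis .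
qed

lemma stability_estimate:
  assumes "real m * dt \<le> T"
  shows "(dnorm S beta (rho m))\<^sup>2 + (dvnorm S beta (grad (c m)))\<^sup>2
       + dt * (\<Sum>n<m. (dnorm S beta (dlap grad dv (\<lambda>z. (ct (Suc n) z + c n z) / 2)))\<^sup>2)
       + dt\<^sup>2 / 4 * (dnorm S beta (\<lambda>z. lam m z * gder M (rho m z) + xi m))\<^sup>2
       + dt * (\<Sum>n<m. (dvnorm S beta (grad (\<lambda>z. (rt (Suc n) z + rho n z) / 2)))\<^sup>2)
       \<le> exp (2 * stability_rate M * T) * ((dnorm S beta (rho 0))\<^sup>2 + (dvnorm S beta (grad (c 0)))\<^sup>2)"
  using stability_bound[OF assms, unfolded stability_functional_0]
  unfolding stability_functional_def state_energy_def
    dnorm_power2[OF weights_pos] dvnorm_power2[OF weights_pos] .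

end

theorem mainTheorem9:
  fixes M T :: real
  assumes "M > 0" and "T > 0"
  shows "\<exists>C>0. \<forall>(S :: (real^'d) set) beta grad dv \<sigma> dt rho c ct rt lam xi th m.
     disc_setting S beta grad dv \<and> \<sigma> > 0 \<and> dt > 0 \<and>
     cn_scheme S beta grad dv M \<sigma> dt rho c ct rt lam xi th m \<and>
     m \<ge> 1 \<and> real m * dt \<le> T \<longrightarrow>
       (dnorm S beta (rho m))\<^sup>2 + (dvnorm S beta (grad (c m)))\<^sup>2
       + dt * (\<Sum>n<m. (dnorm S beta (dlap grad dv (\<lambda>z. (ct (Suc n) z + c n z) / 2)))\<^sup>2)
       + dt\<^sup>2 / 4 * (dnorm S beta (\<lambda>z. lam m z * gder M (rho m z) + xi m))\<^sup>2
       + dt * (\<Sum>n<m. (dvnorm S beta (grad (\<lambda>z. (rt (Suc n) z + rho n z) / 2)))\<^sup>2)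
       \<le> C * ((dnorm S beta (rho 0))\<^sup>2 + (dvnorm S beta (grad (c 0)))\<^sup>2)"
proof -
  have "cn_solution S beta grad dv M \<sigma> dt rho c ct rt lam xi th m"
    if "disc_setting S beta grad dv" "dt > 0" "cn_scheme S beta grad dv M \<sigma> dt rho c ct rt lam xi th m"
    for S :: "(real^'d) set" and beta grad dv \<sigma> dt rho c ct rt lam xi th m
    using that \<open>M > 0\<close> by (simp add: cn_solution_def cn_solution_axioms_def disc_calculus_def)
  then show ?thesis
    by (intro exI[of _ "exp (2 * stability_rate M * T)"] conjI allI impI)
      (simp, blast intro: cn_solution.stability_estimate)
qed

end
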